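(* Let $\mathcal V$ be a complex vector space, $\Omega\subseteq\mathcal V_{\mathrm{nc}}$ a finitely open nc set, $\mathcal W$ a complex Banach space with an admissible system of matrix norms, $f:\Omega\to\mathcal W_{\mathrm{nc}}$ a G-differentiable nc function, $s\in\mathbb N$ and $Y\in\Omega_s$. Suppose that $$f(X)=\sum_{\ell=0}^\infty\Bigl(X-\bigoplus_{\alpha=1}^mY\Bigr)^{\odot_s\ell}f_\ell\qquad(X\in\Gamma\cap\mathcal V^{sm\times sm},\ m=1,2,\dots),$$ where $\Gamma$ is a finitely open subset of $\Omega$ which contains $\bigoplus_{\alpha=1}^mY$ for every $m\in\mathbb N$, and $f_\ell:(\mathcal V^{s\times s})^\ell\to\mathcal W^{s\times s}$ is $\ell$-linear for each $\ell=0,1,\dots$. Then $f_\ell=\Delta_R^\ell f(Y,\dots,Y)$ ($\ell+1$ arguments) for every $\ell$.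
   Context: $\mathcal V_{\mathrm{nc}}=\coprod_n\mathcal V^{n\times n}$; complex matrices act on matrices over $\mathcal V,\mathcal W$ by multiplication; $X\oplus Y=\begin{bmatrix}X&0\\0&Y\end{bmatrix}$. A nc set is a subset closed under direct sums, $\Omega_n=\Omega\cap\mathcal V^{n\times n}$; a nc function satisfies $f(\Omega_n)\subseteq\mathcal W^{n\times n}$, $f(X\oplus Y)=f(X)\oplus f(Y)$, $f(SXS^{-1})=Sf(X)S^{-1}$ for invertible $S\in\mathbb C^{n\times n}$ with $X,SXS^{-1}\in\Omega_n$. A subset of $\mathcal V_{\mathrm{nc}}$ is finitely open if its intersection with every finite-dimensional subspace $\mathcal U$ of any $\mathcal V^{n\times n}$ is Euclidean-open in $\mathcal U$. An admissible system of matrix norms over $\mathcal W$ is a sequence of norms $\|\cdot\|_n$ on $\mathcal W^{n\times n}$ with constants $C_1(n,m),C_1'(n,m),C_2(n)>0$ such that $C_1(n,m)^{-1}\max\{\|X\|_n,\|Y\|_m\}\le\|X\oplus Y\|_{n+m}\le C_1'(n,m)\max\{\|X\|_n,\|Y\|_m\}$ and $\|SXT\|_n\le C_2(n)\|S\|\|X\|_n\|T\|$. $f$ is G-differentiable if $\lim_{t\to0}(f(X+tZ)-f(X))/t$ exists in $\mathcal W^{n\times n}$ for all $X\in\Omega_n$, $Z\in\mathcal V^{n\times n}$. For $W\in\mathcal V^{sm\times sm}$ viewed as an $m\times m$ matrix of blocks $W_{ij}\in\mathcal V^{s\times s}$, $W^{\odot_s\ell}$ is the $m\times m$ matrix over $(\mathcal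 V^{s\times s})^{\otimes\ell}$ with $(i,k)$ entry $\sum_{j_1,\dots,j_{\ell-1}}W_{ij_1}\otimes\cdots\otimes W_{j_{\ell-1}k}$, $W^{\odot_s\ell}f_\ell\in\mathcal W^{sm\times sm}$ applies $f_\ell$ entrywise, and $W^{\odot_s0}f_0=\bigoplus_{\alpha=1}^mf_0$; the series converges in norm. Higher order operators: finitely open nc sets are right admissible; with $\tilde\Omega=\{SXS^{-1}\}$ and $\tilde f(SXS^{-1})=Sf(X)S^{-1}$ the unique nc extension, for $X^j\in\Omega_{n_j}$, $Z^j\in\mathcal V^{n_{j-1}\times n_j}$, the block upper bidiagonal matrix $B$ with diagonal $X^0,\dots,X^\ell$ and superdiagonal $Z^1,\dots,Z^\ell$ lies in $\tilde\Omega$ and $\Delta_R^\ell f(X^0,\dots,X^\ell)(Z^1,\dots,Z^\ell)$ is the $(1,\ell+1)$ block of $\tilde f(B)$ ($\Delta_R^0f=f$). *)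

theory Defs
  imports "HOL-Analysis.Analysis"
begin

text \<open>Matrices are represented as functions nat => nat => 'a; an n x m matrix is one whose
 entries vanish outside the index range {..<n} x {..<m}.  Elements of V_nc are pairs (n, X)
 with n >= 1 and X an n x n matrix over V.  Complex scalar multiplications on V and W are
 explicit parameters (Isabelle/HOL has no class of complex vector spaces).\<close>

type_synonym 'a mtx = "nat \<Rightarrow> nat \<Rightarrow> 'a"

definition dimmat :: "nat \<Rightarrow> nat \<Rightarrow> ('a::zero) mtx set" where
  "dimmat n m = {M. \<forall>i j. (n \<le> i \<or> m \<le> j) \<longrightarrow> M i j = 0}"

definition ncspace :: "(nat \<times> ('a::zero) mtx) set" where
  "ncspace = {(n, X). 0 < n \<and> X \<in> dimmat n n}"

definition dsum :: "nat \<Rightarrow> ('a::zero) mtx \<Rightarrow> 'a mtx \<Rightarrow> 'a mtx" where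
  "dsum n X Y = (\<lambda>i j. if i < n \<and> j < n then X i j
                      else if n \<le> i \<and> n \<le> j then Y (i - n) (j - n) else 0)"

definition nc_set :: "(nat \<times> ('a::zero) mtx) set \<Rightarrow> bool" where
  "nc_set \<Omega> \<longleftrightarrow> \<Omega> \<subseteq> ncspace \<and>
     (\<forall>n X m Y. (n, X) \<in> \<Omega> \<longrightarrow> (m, Y) \<in> \<Omega> \<longrightarrow> (n + m, dsum n X Y) \<in> \<Omega>)"

definition cmul :: "nat \<Rightarrow> complex mtx \<Rightarrow> complex mtx \<Rightarrow> complex mtx" where
  "cmul n S T = (\<lambda>i k. \<Sum>j<n. S i j * T j k)"

definition lmul :: "(complex \<Rightarrow> 'a::ab_group_add \<Rightarrow> 'a) \<Rightarrow> nat \<Rightarrow> complex mtx \<Rightarrow> 'a mtx \<Rightarrow> 'a mtx" where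
  "lmul sc n S X = (\<lambda>i k. \<Sum>j<n. sc (S i j) (X j k))"

definition rmul :: "(complex \<Rightarrow> 'a::ab_group_add \<Rightarrow> 'a) \<Rightarrow> nat \<Rightarrow> 'a mtx \<Rightarrow> complex mtx \<Rightarrow> 'a mtx" where
  "rmul sc n X T = (\<lambda>i k. \<Sum>j<n. sc (T j k) (X i j))"

definition idm :: "nat \<Rightarrow> complex mtx" where
  "idm n = (\<lambda>i j. if i = j \<and> i < n then 1 else 0)"

definition inv_pair :: "nat \<Rightarrow> complex mtx \<Rightarrow> complex mtx \<Rightarrow> bool" where
  "inv_pair n S T \<longleftrightarrow> S \<in> dimmat n n \<and> T \<in> dimmat n n \<and>
     cmul n S T = idm n \<and> cmul n T S = idm n"

definition sim :: "(complex \<Rightarrow> 'a::ab_group_add \<Rightarrow> 'a) \<Rightarrow> nat \<Rightarrow> complex mtx \<Rightarrow> complex mtx \<Rightarrow> 'a mtx \<Rightarrow> 'a mtx" where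
  "sim sc n S T X = rmul sc n (lmul sc n S X) T"

definition nc_fun :: "(complex \<Rightarrow> 'v::ab_group_add \<Rightarrow> 'v) \<Rightarrow> (complex \<Rightarrow> 'w::ab_group_add \<Rightarrow> 'w)
    \<Rightarrow> (nat \<times> 'v mtx) set \<Rightarrow> (nat \<times> 'v mtx \<Rightarrow> 'w mtx) \<Rightarrow> bool" where
  "nc_fun scV scW \<Omega> f \<longleftrightarrow>
     (\<forall>n X. (n, X) \<in> \<Omega> \<longrightarrow> f (n, X) \<in> dimmat n n) \<and>
     (\<forall>n X m Y. (n, X) \<in> \<Omega> \<longrightarrow> (m, Y) \<in> \<Omega> \<longrightarrow>
        f (n + m, dsum n X Y) = dsum n (f (n, X)) (f (m, Y))) \<and>
     (\<forall>n X S T. (n, X) \<in> \<Omega> \<longrightarrow> inv_pair n S T \<longrightarrow> (n, sim scV n S T X) \<in> \<Omega> \<longrightarrow>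
        f (n, sim scV n S T X) = sim scW n S T (f (n, X)))"

definition lincomb :: "(complex \<Rightarrow> 'a::ab_group_add \<Rightarrow> 'a) \<Rightarrow> nat \<Rightarrow> (nat \<Rightarrow> complex) \<Rightarrow> (nat \<Rightarrow> 'a mtx) \<Rightarrow> 'a mtx" where
  "lincomb sc k c u = (\<lambda>a b. \<Sum>i<k. sc (c i) (u i a b))"

text \<open>Finitely open: for every finite-dimensional subspace U of some V^{n x n}, with basis
 u_0,...,u_{k-1} (so U is identified with C^k via coordinates), the set of coordinate vectors
 of points of the set lying in U is open in C^k (Euclidean topology, written with max-norm balls).\<close>
definition finitely_open :: "(complex \<Rightarrow> 'v::ab_group_add \<Rightarrow> 'v) \<Rightarrow> (nat \<times> 'v mtx) set \<Rightarrow> bool" where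
  "finitely_open sc A \<longleftrightarrow>
     (\<forall>n k (u :: nat \<Rightarrow> 'v mtx).
        (\<forall>i<k. u i \<in> dimmat n n) \<longrightarrow>
        (\<forall>c. lincomb sc k c u = (\<lambda>a b. 0) \<longrightarrow> (\<forall>i<k. c i = 0)) \<longrightarrow>
        (\<forall>c. (n, lincomb sc k c u) \<in> A \<longrightarrow>
           (\<exists>\<epsilon>>0. \<forall>d. (\<forall>i<k. cmod (d i - c i) < \<epsilon>) \<longrightarrow> (n, lincomb sc k d u) \<in> A)))"

text \<open>Complex Banach space structure on 'w: a real Banach space with a complex scalar
 multiplication extending the real one and with absolutely homogeneous norm.\<close>
definition complex_banach :: "(complex \<Rightarrow> 'w::banach \<Rightarrow> 'w) \<Rightarrow> bool" where
  "complex_banach sc \<longleftrightarrow> vector_space sc \<and>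
     (\<forall>r w. sc (complex_of_real r) w = r *\<^sub>R w) \<and>
     (\<forall>c w. norm (sc c w) = cmod c * norm w)"

definition cmat_norm :: "nat \<Rightarrow> complex mtx \<Rightarrow> real" where
  "cmat_norm n S = (SUP x\<in>{x :: nat \<Rightarrow> complex. (\<Sum>j<n. (cmod (x j))\<^sup>2) \<le> 1}.
                      sqrt (\<Sum>i<n. (cmod (\<Sum>j<n. S i j * x j))\<^sup>2))"

definition is_norm_on :: "(complex \<Rightarrow> 'w::ab_group_add \<Rightarrow> 'w) \<Rightarrow> nat \<Rightarrow> ('w mtx \<Rightarrow> real) \<Rightarrow> bool" where
  "is_norm_on sc n N \<longleftrightarrow>
     (\<forall>X\<in>dimmat n n. 0 \<le> N X \<and> (N X = 0 \<longleftrightarrow> X = (\<lambda>i j. 0))) \<and>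
     (\<forall>X\<in>dimmat n n. \<forall>c. N (\<lambda>i j. sc c (X i j)) = cmod c * N X) \<and>
     (\<forall>X\<in>dimmat n n. \<forall>Y\<in>dimmat n n. N (\<lambda>i j. X i j + Y i j) \<le> N X + N Y)"

definition admissible_norms :: "(complex \<Rightarrow> 'w::banach \<Rightarrow> 'w) \<Rightarrow> (nat \<Rightarrow> 'w mtx \<Rightarrow> real) \<Rightarrow> bool" where
  "admissible_norms sc nrm \<longleftrightarrow>
     (\<forall>n>0. is_norm_on sc n (nrm n)) \<and>
     (\<forall>X\<in>dimmat 1 1. nrm 1 X = norm (X 0 0)) \<and>
     (\<exists>C1 C1' :: nat \<Rightarrow> nat \<Rightarrow> real. \<exists>C2 :: nat \<Rightarrow> real.
        (\<forall>n m. 0 < C1 n m \<and> 0 < C1' n m) \<and> (\<forall>n. 0 < C2 n) \<and>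
        (\<forall>n m X Y. 0 < n \<longrightarrow> 0 < m \<longrightarrow> X \<in> dimmat n n \<longrightarrow> Y \<in> dimmat m m \<longrightarrow>
            max (nrm n X) (nrm m Y) / C1 n m \<le> nrm (n + m) (dsum n X Y) \<and>
            nrm (n + m) (dsum n X Y) \<le> C1' n m * max (nrm n X) (nrm m Y)) \<and>
        (\<forall>n S X T. 0 < n \<longrightarrow> S \<in> dimmat n n \<longrightarrow> X \<in> dimmat n n \<longrightarrow> T \<in> dimmat n n \<longrightarrow>
            nrm n (rmul sc n (lmul sc n S X) T) \<le> C2 n * cmat_norm n S * nrm n X * cmat_norm n T))"

text \<open>G-differentiability (limits in W^{n x n}, i.e. entrywise; all norms on it are equivalent).\<close>
definition G_diff :: "(complex \<Rightarrow> 'v::ab_group_add \<Rightarrow> 'v) \<Rightarrow> (complex \<Rightarrow> 'w::banach \<Rightarrow> 'w)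
    \<Rightarrow> (nat \<times> 'v mtx) set \<Rightarrow> (nat \<times> 'v mtx \<Rightarrow> 'w mtx) \<Rightarrow> bool" where
  "G_diff scV scW \<Omega> f \<longleftrightarrow>
     (\<forall>n X Z. (n, X) \<in> \<Omega> \<longrightarrow> Z \<in> dimmat n n \<longrightarrow> (\<forall>i<n. \<forall>j<n. \<exists>L.
        ((\<lambda>t::complex. scW (inverse t)
            (f (n, \<lambda>a b. X a b + scV t (Z a b)) i j - f (n, X) i j)) \<longlongrightarrow> L) (at 0)))"

definition dpow :: "nat \<Rightarrow> ('a::zero) mtx \<Rightarrow> nat \<Rightarrow> 'a mtx" where
  "dpow s Y m = (\<lambda>I J. if I < s * m \<and> J < s * m \<and> I div s = J div s
                        then Y (I mod s) (J mod s) else 0)"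

definition blk :: "nat \<Rightarrow> ('a::zero) mtx \<Rightarrow> nat \<Rightarrow> nat \<Rightarrow> 'a mtx" where
  "blk s W a b = (\<lambda>u v. if u < s \<and> v < s then W (a * s + u) (b * s + v) else 0)"

text \<open>W^{\<odot>_s l} f_l for W in V^{sm x sm}, where the l-linear map f_l is given as a function of
 the list of its l arguments.  The (i,k) block is the sum over all index sequences
 i = j_0, j_1, ..., j_l = k of f_l(W_{j_0 j_1}, ..., W_{j_{l-1} j_l}); for l = 0 this is
 f_0 on the diagonal blocks, i.e. the m-fold direct sum of f_0.\<close>
definition odot_apply :: "nat \<Rightarrow> nat \<Rightarrow> ('v::zero) mtx \<Rightarrow> nat \<Rightarrow> ('v mtx list \<Rightarrow> ('w::comm_monoid_add) mtx) \<Rightarrow> 'w mtx" where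
  "odot_apply s m W l fl = (\<lambda>I J. if I < s * m \<and> J < s * m then
      (\<Sum>js\<in>{js. length js = Suc l \<and> set js \<subseteq> {..<m} \<and> js ! 0 = I div s \<and> js ! l = J div s}.
         fl (map (\<lambda>p. blk s W (js ! p) (js ! Suc p)) [0..<l]) (I mod s) (J mod s))
      else 0)"

definition multilinear :: "(complex \<Rightarrow> 'v::ab_group_add \<Rightarrow> 'v) \<Rightarrow> (complex \<Rightarrow> 'w::ab_group_add \<Rightarrow> 'w)
    \<Rightarrow> nat \<Rightarrow> nat \<Rightarrow> ('v mtx list \<Rightarrow> 'w mtx) \<Rightarrow> bool" where
  "multilinear scV scW s l F \<longleftrightarrow>
     (\<forall>Zs. length Zs = l \<longrightarrow> set Zs \<subseteq> dimmat s s \<longrightarrow> F Zs \<in> dimmat s s) \<and>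
     (\<forall>Zs p A B c. length Zs = l \<longrightarrow> set Zs \<subseteq> dimmat s s \<longrightarrow> p < l \<longrightarrow>
        A \<in> dimmat s s \<longrightarrow> B \<in> dimmat s s \<longrightarrow>
        F (Zs[p := (\<lambda>a b. scV c (A a b) + B a b)]) =
          (\<lambda>a b. scW c (F (Zs[p := A]) a b) + F (Zs[p := B]) a b))"

definition bidiag :: "nat \<Rightarrow> ('a::zero) mtx list \<Rightarrow> 'a mtx list \<Rightarrow> 'a mtx" where
  "bidiag s Xs Zs = (\<lambda>I J. if I < s * length Xs \<and> J < s * length Xs then
      (if I div s = J div s then (Xs ! (I div s)) (I mod s) (J mod s)
       else if J div s = Suc (I div s) then (Zs ! (I div s)) (I mod s) (J mod s)
       else 0) else 0)"

definition nc_ext :: "(complex \<Rightarrow> 'v::ab_group_add \<Rightarrow> 'v) \<Rightarrow> (complex \<Rightarrow> 'w::ab_group_add \<Rightarrow> 'w)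
    \<Rightarrow> (nat \<times> 'v mtx) set \<Rightarrow> (nat \<times> 'v mtx \<Rightarrow> 'w mtx) \<Rightarrow> nat \<Rightarrow> 'v mtx \<Rightarrow> 'w mtx" where
  "nc_ext scV scW \<Omega> f N B = (THE R. \<exists>S T X. (N, X) \<in> \<Omega> \<and> inv_pair N S T \<and>
       B = sim scV N S T X \<and> R = sim scW N S T (f (N, X)))"

text \<open>\<Delta>_R^l f(X^0,...,X^l)(Z^1,...,Z^l) for X^j in \<Omega>_s, Z^j in V^{s x s}
 (l = length Zs, length Xs = l + 1): the (1, l+1) block of the extension applied to the
 bidiagonal matrix.\<close>
definition DeltaR :: "(complex \<Rightarrow> 'v::ab_group_add \<Rightarrow> 'v) \<Rightarrow> (complex \<Rightarrow> 'w::ab_group_add \<Rightarrow> 'w)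
    \<Rightarrow> (nat \<times> 'v mtx) set \<Rightarrow> (nat \<times> 'v mtx \<Rightarrow> 'w mtx) \<Rightarrow> nat \<Rightarrow> 'v mtx list \<Rightarrow> 'v mtx list \<Rightarrow> 'w mtx" where
  "DeltaR scV scW \<Omega> f s Xs Zs = blk s (nc_ext scV scW \<Omega> f (s * length Xs) (bidiag s Xs Zs)) 0 (length Zs)"

end

theory Submission
  imports Defs
begin

text \<open>Fix Z^1, ..., Z^l, put m = l + 1, let D be the m-fold direct sum of Y and Z the block
  superdiagonal matrix with superdiagonal blocks Z^1, ..., Z^l.  As \<Gamma> is finitely open,
  D + t Z \<in> \<Gamma> for some small t \<noteq> 0.  In the expansion of f(D + t Z) the (1, l + 1) block
  only receives the contribution of the path 1, 2, ..., l + 1 in the term of degree l, which by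
  multilinearity is t^l f_l(Z^1, ..., Z^l); convergence in an admissible norm is entrywise.
  Conjugation by diag(I, t I, ..., t^l I) carries D + t Z to the bidiagonal matrix defining
  \<Delta>_R^l f(Y, ..., Y)(Z^1, ..., Z^l), so by the nc property that block is t^-l times the
  former one, i.e. f_l(Z^1, ..., Z^l).\<close>

lemma module_complex_mult: "module ((*) :: complex \<Rightarrow> complex \<Rightarrow> complex)"
  by unfold_locales (auto simp: algebra_simps)

lemma cmul_eq_lmul: "cmul n S T = lmul (*) n S T"
  unfolding cmul_def lmul_def ..

lemma sum_scale_if:
  assumes "module sc"
  shows "(\<Sum>j<(n::nat). sc (if P j then c j else 0) (x j)) = (\<Sum>j | j < n \<and> P j. sc (c j) (x j))"
proof -
  interpret module sc by fact
  show ?thesis by (rule sum.mono_neutral_cong_right) (auto simp: finite_nat_set_iff_bounded)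
qed

lemma lmul_lmul:
  assumes "module sc"
  shows "lmul sc n S (lmul sc n S' X) = lmul sc n (cmul n S S') X"
proof -
  interpret module sc by fact
  have "(\<Sum>j<n. sc (S i j) (\<Sum>j'<n. sc (S' j j') (X j' k)))
      = (\<Sum>j'<n. sc (\<Sum>j<n. S i j * S' j j') (X j' k))" for i k
  proof -
    have "(\<Sum>j<n. sc (S i j) (\<Sum>j'<n. sc (S' j j') (X j' k)))
        = (\<Sum>j<n. \<Sum>j'<n. sc (S i j * S' j j') (X j' k))"
      by (simp only: scale_sum_right scale_scale)
    also have "\<dots> = (\<Sum>j'<n. sc (\<Sum>j<n. S i j * S' j j') (X j' k))"
      by (subst sum.swap) (simp only: scale_sum_left)
    finally show ?thesis .
  qed
  then show ?thesis unfolding lmul_def cmul_def by (intro ext)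
qed

lemma rmul_rmul:
  assumes "module sc"
  shows "rmul sc n (rmul sc n X T') T = rmul sc n X (cmul n T' T)"
proof -
  interpret module sc by fact
  have "(\<Sum>j<n. sc (T j k) (\<Sum>j'<n. sc (T' j' j) (X i j')))
      = (\<Sum>j'<n. sc (\<Sum>j<n. T' j' j * T j k) (X i j'))" for i k
  proof -
    have "(\<Sum>j<n. sc (T j k) (\<Sum>j'<n. sc (T' j' j) (X i j')))
        = (\<Sum>j<n. \<Sum>j'<n. sc (T' j' j * T j k) (X i j'))"
      by (simp only: scale_sum_right scale_scale mult.commute)
    also have "\<dots> = (\<Sum>j'<n. sc (\<Sum>j<n. T' j' j * T j k) (X i j'))"
      by (subst sum.swap) (simp only: scale_sum_left)
    finally show ?thesis .
  qed
  then show ?thesis unfolding rmul_def cmul_def by (intro ext)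
qed

lemma lmul_rmul_commute:
  assumes "module sc"
  shows "lmul sc n S (rmul sc n X T) = rmul sc n (lmul sc n S X) T"
proof -
  interpret module sc by fact
  have "(\<Sum>j<n. sc (S i j) (\<Sum>j'<n. sc (T j' k) (X j j')))
      = (\<Sum>j'<n. sc (T j' k) (\<Sum>j<n. sc (S i j) (X j j')))" for i k
  proof -
    have "(\<Sum>j<n. sc (S i j) (\<Sum>j'<n. sc (T j' k) (X j j')))
        = (\<Sum>j<n. \<Sum>j'<n. sc (T j' k) (sc (S i j) (X j j')))"
      by (simp only: scale_sum_right scale_left_commute)
    also have "\<dots> = (\<Sum>j'<n. sc (T j' k) (\<Sum>j<n. sc (S i j) (X j j')))"
      by (subst sum.swap) (simp only: scale_sum_right)
    finally show ?thesis .
  qed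
  then show ?thesis unfolding rmul_def lmul_def by (intro ext)
qed

definition diagm :: "nat \<Rightarrow> (nat \<Rightarrow> complex) \<Rightarrow> complex mtx" where
  "diagm n d = (\<lambda>a b. if a = b \<and> a < n then d a else 0)"

lemma idm_eq_diagm: "idm n = diagm n (\<lambda>_. 1)"
  unfolding idm_def diagm_def by auto

lemma lmul_diagm:
  assumes "module sc"
  shows "lmul sc n (diagm n d) X = (\<lambda>a k. if a < n then sc (d a) (X a k) else 0)"
proof (intro ext)
  fix a k
  have "lmul sc n (diagm n d) X a k = (\<Sum>j | j < n \<and> a = j \<and> a < n. sc (d a) (X j k))"
    unfolding lmul_def diagm_def by (rule sum_scale_if[OF assms])
  also have "{j. j < n \<and> a = j \<and> a < n} = (if a < n then {a} else {})" by auto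
  finally show "lmul sc n (diagm n d) X a k = (if a < n then sc (d a) (X a k) else 0)" by simp
qed

lemma rmul_diagm:
  assumes "module sc"
  shows "rmul sc n X (diagm n d) = (\<lambda>a k. if k < n then sc (d k) (X a k) else 0)"
proof (intro ext)
  fix a k
  have "rmul sc n X (diagm n d) a k = (\<Sum>j | j < n \<and> j = k \<and> j < n. sc (d j) (X a j))"
    unfolding rmul_def diagm_def by (rule sum_scale_if[OF assms])
  also have "{j. j < n \<and> j = k \<and> j < n} = (if k < n then {k} else {})" by auto
  finally show "rmul sc n X (diagm n d) a k = (if k < n then sc (d k) (X a k) else 0)" by simp
qed

lemma sim_diagm:
  assumes "module sc"
  shows "sim sc n (diagm n d) (diagm n d') X
       = (\<lambda>a b. if a < n \<and> b < n then sc (d' b * d a) (X a b) else 0)"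
proof -
  interpret module sc by fact
  show ?thesis unfolding sim_def lmul_diagm[OF assms] rmul_diagm[OF assms] by (intro ext) auto
qed

lemma lmul_idm:
  assumes "module sc" "X \<in> dimmat n n"
  shows "lmul sc n (idm n) X = X"
proof -
  interpret module sc by fact
  show ?thesis using assms(2)
    unfolding idm_eq_diagm lmul_diagm[OF assms(1)] dimmat_def by (intro ext) auto
qed

lemma rmul_idm:
  assumes "module sc" "X \<in> dimmat n n"
  shows "rmul sc n X (idm n) = X"
proof -
  interpret module sc by fact
  show ?thesis using assms(2)
    unfolding idm_eq_diagm rmul_diagm[OF assms(1)] dimmat_def by (intro ext) auto
qed

lemma cmul_assoc: "cmul n (cmul n A B) C = cmul n A (cmul n B C)"
  unfolding cmul_eq_lmul using lmul_lmul[OF module_complex_mult] cmul_eq_lmul by metis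

lemma cmul_idm_left: "A \<in> dimmat n n \<Longrightarrow> cmul n (idm n) A = A"
  unfolding cmul_eq_lmul by (rule lmul_idm[OF module_complex_mult])

lemma cmul_idm_right: "A \<in> dimmat n n \<Longrightarrow> cmul n A (idm n) = A"
  using rmul_idm[OF module_complex_mult] unfolding rmul_def cmul_def by (simp add: mult.commute)

lemma cmul_dimmat: "S \<in> dimmat n n \<Longrightarrow> T \<in> dimmat n n \<Longrightarrow> cmul n S T \<in> dimmat n n"
  unfolding dimmat_def cmul_def by auto

lemma sim_sim:
  assumes "module sc"
  shows "sim sc n S T (sim sc n S' T' X) = sim sc n (cmul n S S') (cmul n T' T) X"
  unfolding sim_def by (simp only: lmul_rmul_commute[OF assms] lmul_lmul[OF assms] rmul_rmul[OF assms])

lemma sim_idm: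
  assumes "module sc" "X \<in> dimmat n n"
  shows "sim sc n (idm n) (idm n) X = X"
  unfolding sim_def by (simp add: assms lmul_idm rmul_idm)

lemma inv_pair_sym: "inv_pair n S T \<Longrightarrow> inv_pair n T S"
  unfolding inv_pair_def by auto

lemma inv_pair_cmul:
  assumes "inv_pair n S T" "inv_pair n S' T'"
  shows "inv_pair n (cmul n S S') (cmul n T' T)"
proof -
  have "cmul n (cmul n S S') (cmul n T' T) = cmul n S (cmul n (cmul n S' T') T)"
    "cmul n (cmul n T' T) (cmul n S S') = cmul n T' (cmul n (cmul n T S) S')"
    by (simp_all add: cmul_assoc)
  with assms show ?thesis unfolding inv_pair_def by (simp add: cmul_idm_left cmul_dimmat)
qed

lemma inv_pair_diagm:
  assumes "\<And>a. a < n \<Longrightarrow> d a * d' a = 1"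
  shows "inv_pair n (diagm n d) (diagm n d')"
  using assms unfolding inv_pair_def cmul_eq_lmul lmul_diagm[OF module_complex_mult]
  by (auto simp: idm_def diagm_def dimmat_def mult.commute intro!: ext)

lemma nc_set_dimmat: "nc_set \<Omega> \<Longrightarrow> (n, X) \<in> \<Omega> \<Longrightarrow> X \<in> dimmat n n"
  unfolding nc_set_def ncspace_def by auto

lemma nc_ext_sim:
  assumes V: "module scV" and W: "module scW" and \<Omega>: "nc_set \<Omega>" and f: "nc_fun scV scW \<Omega> f"
    and X: "(N, X) \<in> \<Omega>" and ST: "inv_pair N S T"
  shows "nc_ext scV scW \<Omega> f N (sim scV N S T X) = sim scW N S T (f (N, X))"
  unfolding nc_ext_def
proof (rule the_equality)
  show "\<exists>S' T' X'. (N, X') \<in> \<Omega> \<and> inv_pair N S' T' \<and> sim scV N S T X = sim scV N S' T' X' \<and>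
      sim scW N S T (f (N, X)) = sim scW N S' T' (f (N, X'))"
    using X ST by blast
next
  fix R
  assume "\<exists>S' T' X'. (N, X') \<in> \<Omega> \<and> inv_pair N S' T' \<and> sim scV N S T X = sim scV N S' T' X' \<and>
      R = sim scW N S' T' (f (N, X'))"
  then obtain S' T' X' where X': "(N, X') \<in> \<Omega>" and S'T': "inv_pair N S' T'"
    and eq: "sim scV N S T X = sim scV N S' T' X'" and R: "R = sim scW N S' T' (f (N, X'))"
    by blast
  have inv: "S \<in> dimmat N N" "T \<in> dimmat N N" "cmul N S T = idm N" "cmul N T S = idm N"
    "S' \<in> dimmat N N" "T' \<in> dimmat N N" "cmul N S' T' = idm N" "cmul N T' S' = idm N"
    using ST S'T' unfolding inv_pair_def by auto
  have "X' = sim scV N T' S' (sim scV N S' T' X')"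
    using sim_idm[OF V nc_set_dimmat[OF \<Omega> X']] by (simp add: sim_sim[OF V] inv)
  also have "\<dots> = sim scV N (cmul N T' S) (cmul N T S') X"
    by (simp add: eq[symmetric] sim_sim[OF V])
  finally have "f (N, X') = sim scW N (cmul N T' S) (cmul N T S') (f (N, X))"
    using f X X' inv_pair_cmul[OF inv_pair_sym[OF S'T'] ST] unfolding nc_fun_def by metis
  then have "R = sim scW N (cmul N (cmul N S' T') S) (cmul N T (cmul N S' T')) (f (N, X))"
    by (simp add: R sim_sim[OF W] cmul_assoc)
  then show "R = sim scW N S T (f (N, X))"
    by (simp add: inv cmul_idm_left cmul_idm_right)
qed

lemma admissible_normsE:
  assumes "admissible_norms sc nrm"
  obtains C1 :: "nat \<Rightarrow> nat \<Rightarrow> real" and C2 :: "nat \<Rightarrow> real" where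
    "\<And>n m. 0 < C1 n m"
    "\<And>n m X Y. 0 < n \<Longrightarrow> 0 < m \<Longrightarrow> X \<in> dimmat n n \<Longrightarrow> Y \<in> dimmat m m \<Longrightarrow>
       max (nrm n X) (nrm m Y) \<le> C1 n m * nrm (n + m) (dsum n X Y)"
    "\<And>n S X T. 0 < n \<Longrightarrow> S \<in> dimmat n n \<Longrightarrow> X \<in> dimmat n n \<Longrightarrow> T \<in> dimmat n n \<Longrightarrow>
       nrm n (rmul sc n (lmul sc n S X) T) \<le> C2 n * cmat_norm n S * nrm n X * cmat_norm n T"
    "\<And>X. X \<in> dimmat 1 1 \<Longrightarrow> nrm 1 X = norm (X 0 0)"
proof -
  from assms obtain C1 C1' :: "nat \<Rightarrow> nat \<Rightarrow> real" and C2 where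
    pos: "\<forall>n m. 0 < C1 n m \<and> 0 < C1' n m" and
    dsum: "\<forall>n m X Y. 0 < n \<longrightarrow> 0 < m \<longrightarrow> X \<in> dimmat n n \<longrightarrow> Y \<in> dimmat m m \<longrightarrow>
      max (nrm n X) (nrm m Y) / C1 n m \<le> nrm (n + m) (dsum n X Y) \<and>
      nrm (n + m) (dsum n X Y) \<le> C1' n m * max (nrm n X) (nrm m Y)" and
    mult: "\<forall>n S X T. 0 < n \<longrightarrow> S \<in> dimmat n n \<longrightarrow> X \<in> dimmat n n \<longrightarrow> T \<in> dimmat n n \<longrightarrow>
      nrm n (rmul sc n (lmul sc n S X) T) \<le> C2 n * cmat_norm n S * nrm n X * cmat_norm n T" and
    one: "\<forall>X\<in>dimmat 1 1. nrm 1 X = norm (X 0 0)"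
    using assms[unfolded admissible_norms_def] by (elim exE conjE) blast
  show thesis
  proof (rule that[of C1 C2])
    show "max (nrm n X) (nrm m Y) \<le> C1 n m * nrm (n + m) (dsum n X Y)"
      if "0 < n" "0 < m" "X \<in> dimmat n n" "Y \<in> dimmat m m" for n m X Y
      using dsum that pos by (simp add: pos_divide_le_eq mult.commute)
  qed (use pos mult one in auto)
qed

definition munit :: "nat \<Rightarrow> nat \<Rightarrow> complex mtx" where
  "munit p q = (\<lambda>a b. if a = p \<and> b = q then 1 else 0)"

lemma lmul_munit:
  assumes "module sc" "i < n"
  shows "lmul sc n (munit p i) X = (\<lambda>a k. if a = p then X i k else 0)"
proof (intro ext)
  interpret module sc by fact
  fix a k
  have "lmul sc n (munit p i) X a k = (\<Sum>j | j < n \<and> a = p \<and> j = i. sc 1 (X j k))"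
    unfolding lmul_def munit_def by (rule sum_scale_if[OF assms(1)])
  also have "{j. j < n \<and> a = p \<and> j = i} = (if a = p then {i} else {})" using assms(2) by auto
  finally show "lmul sc n (munit p i) X a k = (if a = p then X i k else 0)" by simp
qed

lemma rmul_munit:
  assumes "module sc" "j < n"
  shows "rmul sc n M (munit j q) = (\<lambda>a b. if b = q then M a j else 0)"
proof (intro ext)
  interpret module sc by fact
  fix a b
  have "rmul sc n M (munit j q) a b = (\<Sum>j' | j' < n \<and> j' = j \<and> b = q. sc 1 (M a j'))"
    unfolding rmul_def munit_def by (rule sum_scale_if[OF assms(1)])
  also have "{j'. j' < n \<and> j' = j \<and> b = q} = (if b = q then {j} else {})" using assms(2) by auto
  finally show "rmul sc n M (munit j q) a b = (if b = q then M a j else 0)" by simp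
qed

text \<open>Cut the entry out with matrix units and, if n > 1, pad the resulting 1 x 1 matrix by a
  zero block.\<close>
lemma admissible_entry_bound:
  fixes sc :: "complex \<Rightarrow> 'w::banach \<Rightarrow> 'w"
  assumes W: "module sc" and adm: "admissible_norms sc nrm" and ij: "i < n" "j < n"
  obtains K where "\<And>X. X \<in> dimmat n n \<Longrightarrow> norm (X i j) \<le> K * nrm n X"
proof -
  interpret module sc by fact
  obtain C1 C2 where C1: "\<And>n m. 0 < C1 n m"
    and dsum: "\<And>n m X Y. 0 < n \<Longrightarrow> 0 < m \<Longrightarrow> X \<in> dimmat n n \<Longrightarrow> Y \<in> dimmat m m \<Longrightarrow>
       max (nrm n X) (nrm m Y) \<le> C1 n m * nrm (n + m) (dsum n X Y)"
    and mult: "\<And>n S X T. 0 < n \<Longrightarrow> S \<in> dimmat n n \<Longrightarrow> X \<in> dimmat n n \<Longrightarrow> T \<in> dimmat n n \<Longrightarrow>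
       nrm n (rmul sc n (lmul sc n S X) T) \<le> C2 n * cmat_norm n S * nrm n X * cmat_norm n T"
    and one: "\<And>X. X \<in> dimmat 1 1 \<Longrightarrow> nrm 1 X = norm (X 0 0)"
    using admissible_normsE[OF adm] by blast
  define S where "S = munit 0 i"
  define T where "T = munit j 0"
  define E :: "'w mtx \<Rightarrow> 'w mtx" where "E X = (\<lambda>a b. if a = 0 \<and> b = 0 then X i j else 0)" for X
  have ST: "S \<in> dimmat n n" "T \<in> dimmat n n" using ij unfolding S_def T_def munit_def dimmat_def by auto
  have SXT: "rmul sc n (lmul sc n S X) T = E X" for X
    unfolding S_def T_def E_def lmul_munit[OF W ij(1)] rmul_munit[OF W ij(2)] by (auto intro!: ext)
  have E1: "E X \<in> dimmat 1 1" "nrm 1 (E X) = norm (X i j)" for X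
    using one[of "E X"] unfolding E_def dimmat_def by auto
  define c where "c = (if n = 1 then 1 else C1 1 (n - 1))"
  have c: "0 < c" using C1 by (simp add: c_def)
  have "norm (X i j) \<le> (c * C2 n * cmat_norm n S * cmat_norm n T) * nrm n X"
    if X: "X \<in> dimmat n n" for X
  proof -
    have "norm (X i j) \<le> c * nrm n (E X)"
    proof (cases "n = 1")
      case True
      then show ?thesis using E1 by (simp add: c_def)
    next
      case False
      have "dsum 1 (E X) (\<lambda>a b. 0) = E X" unfolding dsum_def E_def by (intro ext) auto
      moreover have "(\<lambda>a b. 0) \<in> dimmat (n - 1) (n - 1)" unfolding dimmat_def by simp
      ultimately show ?thesis
        using dsum[of 1 "n - 1" "E X" "\<lambda>a b. 0"] E1[of X] False ij by (fastforce simp: c_def)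
    qed
    also have "\<dots> \<le> c * (C2 n * cmat_norm n S * nrm n X * cmat_norm n T)"
      using mult[OF _ ST(1) X ST(2)] ij c by (intro mult_left_mono) (simp_all add: SXT)
    finally show ?thesis by (simp add: algebra_simps)
  qed
  then show thesis by (rule that)
qed

lemma admissible_tendsto_entry:
  fixes sc :: "complex \<Rightarrow> 'w::banach \<Rightarrow> 'w"
  assumes "module sc" "admissible_norms sc nrm" "i < n" "j < n"
    and "\<And>L. M L \<in> dimmat n n" and "(\<lambda>L. nrm n (M L)) \<longlonglongrightarrow> 0"
  shows "(\<lambda>L. M L i j) \<longlonglongrightarrow> 0"
proof -
  obtain K where K: "\<And>X. X \<in> dimmat n n \<Longrightarrow> norm (X i j) \<le> K * nrm n X"
    using admissible_entry_bound[OF assms(1-4)] by blast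
  show ?thesis
  proof (rule Lim_null_comparison)
    show "\<forall>\<^sub>F L in sequentially. norm (M L i j) \<le> K * nrm n (M L)" using K assms(5) by simp
    show "(\<lambda>L. K * nrm n (M L)) \<longlonglongrightarrow> 0" using tendsto_mult_right_zero[OF assms(6)] .
  qed
qed

lemma multilinearD:
  assumes "multilinear scV scW s k F" "length Zs = k" "set Zs \<subseteq> dimmat s s" "p < k"
    "A \<in> dimmat s s" "B \<in> dimmat s s"
  shows "F (Zs[p := (\<lambda>a b. scV c (A a b) + B a b)]) =
      (\<lambda>a b. scW c (F (Zs[p := A]) a b) + F (Zs[p := B]) a b)"
  using assms unfolding multilinear_def by blast

lemma multilinear_zero_arg:
  assumes V: "module scV" and W: "module scW" and F: "multilinear scV scW s k F"
    and Zs: "length Zs = k" "set Zs \<subseteq> dimmat s s" and p: "p < k" "Zs ! p = (\<lambda>a b. 0)"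
  shows "F Zs = (\<lambda>a b. 0)"
proof -
  interpret v: module scV by fact
  interpret w: module scW by fact
  have Zs_p: "Zs[p := (\<lambda>a b. 0)] = Zs" using p by (metis list_update_id)
  have zero: "(\<lambda>a b. 0) \<in> dimmat s s" unfolding dimmat_def by simp
  have "F (Zs[p := (\<lambda>a b. scV 1 ((\<lambda>a b. 0) a b) + (\<lambda>a b. 0) a b)]) =
      (\<lambda>a b. scW 1 (F (Zs[p := (\<lambda>a b. 0)]) a b) + F (Zs[p := (\<lambda>a b. 0)]) a b)"
    using multilinearD[OF F Zs p(1) zero zero] .
  then have "F Zs = (\<lambda>a b. F Zs a b + F Zs a b)"
    by (simp add: Zs_p)
  then show ?thesis
    by (metis (no_types, lifting) add_cancel_left_right)
qed

lemma multilinear_scale_arg: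
  assumes V: "module scV" and W: "module scW" and F: "multilinear scV scW s k F"
    and Zs: "length Zs = k" "set Zs \<subseteq> dimmat s s" and p: "p < k"
  shows "F (Zs[p := (\<lambda>a b. scV t ((Zs ! p) a b))]) = (\<lambda>a b. scW t (F Zs a b))"
proof -
  interpret v: module scV by fact
  interpret w: module scW by fact
  have dims: "(\<lambda>a b. 0) \<in> dimmat s s" "Zs ! p \<in> dimmat s s"
    using Zs p nth_mem unfolding dimmat_def by auto
  have "F (Zs[p := (\<lambda>a b. scV t ((Zs ! p) a b) + (\<lambda>a b. 0) a b)]) =
      (\<lambda>a b. scW t (F (Zs[p := Zs ! p]) a b) + F (Zs[p := (\<lambda>a b. 0)]) a b)"
    using multilinearD[OF F Zs p dims(2,1)] .
  moreover have "set (Zs[p := (\<lambda>a b. 0)]) \<subseteq> dimmat s s"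
    by (rule order_trans[OF set_update_subset_insert]) (use Zs(2) dims(1) in simp)
  then have "F (Zs[p := (\<lambda>a b. 0)]) = (\<lambda>a b. 0)"
    using multilinear_zero_arg[OF V W F _ _ p] Zs p by simp
  ultimately show ?thesis by simp
qed

lemma multilinear_scale:
  assumes V: "module scV" and W: "module scW" and F: "multilinear scV scW s k F"
    and Zs: "length Zs = k" "set Zs \<subseteq> dimmat s s"
  shows "F (map (\<lambda>Z a b. scV t (Z a b)) Zs) = (\<lambda>a b. scW (t ^ k) (F Zs a b))"
proof -
  interpret v: module scV by fact
  interpret w: module scW by fact
  define G where "G q = map (\<lambda>p. if p < q then (\<lambda>a b. scV t ((Zs ! p) a b)) else Zs ! p) [0..<k]" for q
  have Zs_nth: "Zs ! p \<in> dimmat s s" if "p < k" for p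
    using Zs nth_mem that by blast
  have G: "length (G q) = k" "set (G q) \<subseteq> dimmat s s" for q
    unfolding G_def using Zs_nth by (auto simp: dimmat_def)
  have "F (G q) = (\<lambda>a b. scW (t ^ q) (F Zs a b))" if "q \<le> k" for q
    using that
  proof (induction q)
    case 0
    have "G 0 = Zs" unfolding G_def using Zs by (intro nth_equalityI) auto
    then show ?case by simp
  next
    case (Suc q)
    have "G (Suc q) = (G q)[q := (\<lambda>a b. scV t ((G q ! q) a b))]"
      using Suc.prems unfolding G_def by (intro nth_equalityI) (auto simp: nth_list_update)
    then show ?case
      using multilinear_scale_arg[OF V W F G, where p = q and t = t] Suc by (simp add: mult.commute)
  qed
  moreover have "G k = map (\<lambda>Z a b. scV t (Z a b)) Zs"
    unfolding G_def using Zs by (intro nth_equalityI) auto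
  ultimately show ?thesis by (metis order_refl)
qed

lemma block_index_less: "a < m \<Longrightarrow> x < (s::nat) \<Longrightarrow> a * s + x < s * m"
proof -
  assume "a < m" "x < s"
  then have "a * s + x < Suc a * s" by simp
  also have "\<dots> \<le> m * s" using \<open>a < m\<close> by (intro mult_le_mono1) simp
  finally show ?thesis by (simp add: mult.commute)
qed

lemma eq_upt_if_nth_Suc:
  assumes "length js = Suc k" "js ! 0 = 0" "\<And>p. p < k \<Longrightarrow> js ! Suc p = Suc (js ! p)"
  shows "js = [0..<Suc k]"
proof -
  have "js ! p = p" if "p \<le> k" for p
    using that assms(2,3) by (induction p) auto
  then show ?thesis
    using assms(1) by (intro nth_equalityI) (auto simp: nth_upt simp del: upt_Suc)
qed

text \<open>Only the index path 0, 1, ..., l avoids the vanishing blocks of M.\<close>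
lemma odot_apply_superdiag_entry:
  assumes V: "module scV" and W: "module scW" and F: "multilinear scV scW s k F"
    and m: "m = Suc l"
    and blk: "\<And>a b. a < m \<Longrightarrow> b < m \<Longrightarrow> blk s M a b = (if b = Suc a then B a else (\<lambda>x y. 0))"
    and xy: "x < s" "y < s"
  shows "odot_apply s m M k F x (l * s + y) = (if k = l then F (map B [0..<l]) x y else 0)"
proof -
  define A where "A = {js. length js = Suc k \<and> set js \<subseteq> {..<m} \<and> js ! 0 = 0 \<and> js ! k = l}"
  define T where "T js = F (map (\<lambda>p. blk s M (js ! p) (js ! Suc p)) [0..<k]) x y" for js
  have "x < s * m" "l * s + y < s * m"
    using block_index_less[of 0 m x s] block_index_less[of l m y s] m xy by auto
  then have odot: "odot_apply s m M k F x (l * s + y) = sum T A"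
    unfolding odot_apply_def A_def T_def using xy by simp
  have "finite A"
  proof (rule finite_subset)
    show "A \<subseteq> {js. set js \<subseteq> {..<m} \<and> length js = Suc k}" unfolding A_def by auto
  qed (rule finite_lists_length_eq, simp)
  have in_m: "js ! p < m" if "js \<in> A" "p \<le> k" for js p
  proof -
    have "p < length js" "set js \<subseteq> {..<m}" using that unfolding A_def by auto
    then show ?thesis by (meson lessThan_iff nth_mem subsetD)
  qed
  have T_zero: "T js = 0" if js: "js \<in> A" "js \<noteq> [0..<Suc k]" for js
  proof -
    have "\<exists>p<k. js ! Suc p \<noteq> Suc (js ! p)"
      using js eq_upt_if_nth_Suc[of js k] unfolding A_def by blast
    then obtain p where p: "p < k" "js ! Suc p \<noteq> Suc (js ! p)" by blast
    let ?Bs = "map (\<lambda>p. blk s M (js ! p) (js ! Suc p)) [0..<k]"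
    have "?Bs ! p = (\<lambda>x y. 0)" using p blk[OF in_m[OF js(1), of p] in_m[OF js(1), of "Suc p"]] by simp
    moreover have "set ?Bs \<subseteq> dimmat s s" by (auto simp: blk_def dimmat_def)
    ultimately show ?thesis
      using multilinear_zero_arg[OF V W F _ _ p(1)] unfolding T_def by simp
  qed
  have "sum T A = sum T (A \<inter> {[0..<Suc k]})"
    using \<open>finite A\<close> T_zero by (intro sum.mono_neutral_right) auto
  also have "\<dots> = (if k = l then T [0..<Suc l] else 0)"
  proof -
    have "[0..<Suc k] \<in> A \<longleftrightarrow> k = l"
      unfolding A_def m by (auto simp del: upt_Suc)
    then show ?thesis by auto
  qed
  also have "\<dots> = (if k = l then F (map B [0..<l]) x y else 0)"
  proof (cases "k = l")
    case True
    have "map (\<lambda>p. blk s M ([0..<Suc l] ! p) ([0..<Suc l] ! Suc p)) [0..<l] = map B [0..<l]"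
      using blk m by (auto simp del: upt_Suc simp add: nth_upt)
    then show ?thesis unfolding T_def True by (simp only:)
  qed simp
  finally show ?thesis using odot by simp
qed

lemma mtx_scale_eq_0_iff:
  assumes "vector_space sc"
  shows "(\<lambda>a b. sc c (Z a b)) = (\<lambda>a b. 0) \<longleftrightarrow> c = 0 \<or> Z = (\<lambda>a b. 0)"
proof -
  interpret vector_space sc by fact
  show ?thesis by (auto simp: fun_eq_iff)
qed

lemma finitely_openD:
  assumes "finitely_open sc A" "\<And>i. i < k \<Longrightarrow> u i \<in> dimmat n n"
    "\<And>c. lincomb sc k c u = (\<lambda>a b. 0) \<Longrightarrow> \<forall>i<k. c i = 0" "(n, lincomb sc k c u) \<in> A"
  obtains \<epsilon> where "\<epsilon> > 0" "\<And>d. (\<And>i. i < k \<Longrightarrow> cmod (d i - c i) < \<epsilon>) \<Longrightarrow> (n, lincomb sc k d u) \<in> A"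
proof -
  have "\<forall>c. lincomb sc k c u = (\<lambda>a b. 0) \<longrightarrow> (\<forall>i<k. c i = 0)" using assms(3) by blast
  with assms(1,2,4) have "\<exists>\<epsilon>>0. \<forall>d. (\<forall>i<k. cmod (d i - c i) < \<epsilon>) \<longrightarrow> (n, lincomb sc k d u) \<in> A"
    unfolding finitely_open_def by blast
  then show thesis using that by blast
qed

lemma mtx_pair_independent:
  assumes V: "vector_space sc" and Z: "Z \<noteq> (\<lambda>a b. 0)" "\<And>c. D \<noteq> (\<lambda>a b. sc c (Z a b))"
    and sum0: "\<And>a b. sc c (D a b) + sc d (Z a b) = 0"
  shows "c = 0 \<and> d = 0"
proof -
  interpret vector_space sc by fact
  have "c = 0"
  proof (rule ccontr)
    assume "c \<noteq> 0"
    have "D a b = sc (- d / c) (Z a b)" for a b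
    proof -
      have "sc c (D a b) = - sc d (Z a b)"
        using sum0[of a b] by (simp add: eq_neg_iff_add_eq_0)
      then have "sc (inverse c) (sc c (D a b)) = sc (inverse c) (- sc d (Z a b))"
        by simp
      with \<open>c \<noteq> 0\<close> show ?thesis by (simp add: divide_inverse mult.commute)
    qed
    with Z(2) show False by blast
  qed
  moreover have "(\<lambda>a b. sc d (Z a b)) = (\<lambda>a b. 0)"
    using sum0 \<open>c = 0\<close> by (simp add: fun_eq_iff)
  then have "d = 0" using Z(1) mtx_scale_eq_0_iff[OF V] by blast
  ultimately show ?thesis ..
qed

text \<open>The line is parametrised inside the span of D and Z, which has dimension at most two.\<close>
lemma finitely_open_line:
  assumes V: "vector_space sc" and A: "finitely_open sc A" and D: "(n, D) \<in> A" "D \<in> dimmat n n"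
    and Z: "Z \<in> dimmat n n"
  obtains \<epsilon> where "\<epsilon> > 0" "\<And>t. cmod t < \<epsilon> \<Longrightarrow> (n, \<lambda>a b. D a b + sc t (Z a b)) \<in> A"
proof -
  interpret vector_space sc by fact
  consider "Z = (\<lambda>a b. 0)"
    | c where "Z \<noteq> (\<lambda>a b. 0)" "D = (\<lambda>a b. sc c (Z a b))"
    | "Z \<noteq> (\<lambda>a b. 0)" "\<And>c. D \<noteq> (\<lambda>a b. sc c (Z a b))"
    by blast
  then show thesis
  proof cases
    case 1
    then show thesis using D by (intro that[of 1]) simp_all
  next
    case 2
    let ?u = "\<lambda>i::nat. Z"
    have span: "lincomb sc (Suc 0) d ?u = (\<lambda>a b. sc (d 0) (Z a b))" for d
      by (simp add: lincomb_def)
    obtain \<epsilon> where "\<epsilon> > 0" and \<epsilon>: "\<And>d. (\<And>i. i < Suc 0 \<Longrightarrow> cmod (d i - c) < \<epsilon>) \<Longrightarrow> (n, lincomb sc (Suc 0) d ?u) \<in> A"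
      by (rule finitely_openD[OF A, of "Suc 0" ?u n "\<lambda>_. c"])
        (use Z 2 D mtx_scale_eq_0_iff[OF V] in \<open>auto simp: span\<close>)
    show thesis
    proof (rule that[OF \<open>\<epsilon> > 0\<close>])
      fix t :: complex assume "cmod t < \<epsilon>"
      then have "(n, lincomb sc (Suc 0) (\<lambda>_. c + t) ?u) \<in> A" by (intro \<epsilon>) simp
      then show "(n, \<lambda>a b. D a b + sc t (Z a b)) \<in> A" by (simp add: span 2 scale_left_distrib)
    qed
  next
    case 3
    let ?u = "\<lambda>i::nat. if i = 0 then D else Z"
    have span: "lincomb sc 2 d ?u = (\<lambda>a b. sc (d 0) (D a b) + sc (d 1) (Z a b))" for d
      by (simp add: lincomb_def numeral_2_eq_2)
    have indep: "\<forall>i<2. d i = 0" if "lincomb sc 2 d ?u = (\<lambda>a b. 0)" for d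
      using mtx_pair_independent[OF V 3, of "d 0" "d 1"] that
      unfolding span by (auto simp: less_2_cases_iff fun_eq_iff)
    let ?e0 = "\<lambda>i::nat. if i = 0 then 1 else 0"
    obtain \<epsilon> where "\<epsilon> > 0" and \<epsilon>: "\<And>d. (\<And>i. i < 2 \<Longrightarrow> cmod (d i - ?e0 i) < \<epsilon>) \<Longrightarrow> (n, lincomb sc 2 d ?u) \<in> A"
      by (rule finitely_openD[OF A, of 2 ?u n ?e0]) (use D Z indep in \<open>auto simp: span\<close>)
    show thesis
    proof (rule that[OF \<open>\<epsilon> > 0\<close>])
      fix t :: complex assume "cmod t < \<epsilon>"
      then have "(n, lincomb sc 2 (\<lambda>i. if i = 0 then 1 else t) ?u) \<in> A"
        using \<open>\<epsilon> > 0\<close> by (intro \<epsilon>) (auto simp: less_2_cases_iff)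
      then show "(n, \<lambda>a b. D a b + sc t (Z a b)) \<in> A" by (simp add: span)
    qed
  qed
qed

lemma finitely_open_line_nonzero:
  assumes "vector_space sc" "finitely_open sc A" "(n, D) \<in> A" "D \<in> dimmat n n" "Z \<in> dimmat n n"
  obtains t where "t \<noteq> 0" "(n, \<lambda>a b. D a b + sc t (Z a b)) \<in> A"
proof -
  obtain \<epsilon> where "\<epsilon> > 0" and \<epsilon>: "\<And>t. cmod t < \<epsilon> \<Longrightarrow> (n, \<lambda>a b. D a b + sc t (Z a b)) \<in> A"
    using finitely_open_line[OF assms] by blast
  then show thesis using that[of "complex_of_real (\<epsilon> / 2)"] by simp
qed

lemma blk_scale:
  assumes "module sc"
  shows "blk s (\<lambda>a b. sc t (M a b)) i j = (\<lambda>x y. sc t (blk s M i j x y))"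
proof -
  interpret module sc by fact
  show ?thesis unfolding blk_def by (auto intro!: ext)
qed

lemma blk_bidiag_zero_diagonal:
  assumes Zs: "length Zs = l" "set Zs \<subseteq> dimmat s s" and ab: "a \<le> l" "b \<le> l"
  shows "blk s (bidiag s (replicate (Suc l) (\<lambda>x y. 0)) Zs) a b
       = (if b = Suc a then Zs ! a else (\<lambda>x y. 0))"
proof (intro ext)
  fix x y
  show "blk s (bidiag s (replicate (Suc l) (\<lambda>x y. 0)) Zs) a b x y
      = (if b = Suc a then Zs ! a else (\<lambda>x y. 0)) x y"
  proof (cases "x < s \<and> y < s")
    case True
    have "a * s + x < s * Suc l" "b * s + y < s * Suc l"
      using block_index_less[of a "Suc l" x s] block_index_less[of b "Suc l" y s] True ab by auto
    moreover have "(s + a * s + y) div s = Suc a" "(s + a * s + y) mod s = y"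
    proof -
      have "s + a * s + y = y + Suc a * s" by simp
      then show "(s + a * s + y) div s = Suc a" "(s + a * s + y) mod s = y"
        using True by (simp_all del: mult_Suc)
    qed
    ultimately show ?thesis using True ab unfolding blk_def bidiag_def by (simp del: replicate.simps)
  next
    case False
    have "Zs ! a \<in> dimmat s s" if "b = Suc a" using Zs ab that nth_mem by fastforce
    with False show ?thesis unfolding blk_def dimmat_def by auto
  qed
qed

definition tdiag :: "nat \<Rightarrow> nat \<Rightarrow> complex \<Rightarrow> complex mtx" where
  "tdiag s m t = diagm (s * m) (\<lambda>a. t ^ (a div s))"

lemma inv_pair_tdiag: "t \<noteq> 0 \<Longrightarrow> inv_pair (s * m) (tdiag s m t) (tdiag s m (inverse t))"
  unfolding tdiag_def by (rule inv_pair_diagm) (simp add: power_inverse)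

text \<open>Conjugation by tdiag s m t = diag(I, t I, ..., t^(m-1) I) turns D + t Z, with D block
  diagonal and Z block superdiagonal, into D + Z.\<close>
lemma bidiag_eq_sim_tdiag:
  assumes V: "module sc" and t: "t \<noteq> 0"
  shows "bidiag s (replicate m Y) Zs = sim sc (s * m) (tdiag s m t) (tdiag s m (inverse t))
           (\<lambda>a b. dpow s Y m a b + sc t (bidiag s (replicate m (\<lambda>x y. 0)) Zs a b))"
proof -
  interpret module sc by fact
  have "bidiag s (replicate m Y) Zs a b =
      sc (inverse t ^ (b div s) * t ^ (a div s)) (dpow s Y m a b + sc t (bidiag s (replicate m (\<lambda>x y. 0)) Zs a b))"
    if ab: "a < s * m" "b < s * m" for a b
  proof -
    have "a div s < m" "b div s < m" using ab by (simp_all add: less_mult_imp_div_less mult.commute)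
    moreover have "inverse t ^ Suc (a div s) * t ^ (a div s) * t = 1" using t by (simp add: field_simps)
    ultimately show ?thesis using ab t unfolding bidiag_def dpow_def by (auto simp: power_inverse)
  qed
  then show ?thesis unfolding tdiag_def sim_diagm[OF V] by (auto simp: bidiag_def intro!: ext)
qed

lemma blk_sim_tdiag:
  assumes "module sc" "t \<noteq> 0" "l < m"
  shows "blk s (sim sc (s * m) (tdiag s m t) (tdiag s m (inverse t)) F) 0 l
       = (\<lambda>x y. if x < s \<and> y < s then sc (inverse t ^ l) (F x (l * s + y)) else 0)"
proof -
  have "x < s * m" "l * s + y < s * m" if "x < s" "y < s" for x y
    using that block_index_less[of 0 m x s] block_index_less[of l m y s] assms(3) by auto
  then show ?thesis unfolding blk_def tdiag_def sim_diagm[OF assms(1)] by (auto intro!: ext)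
qed

lemma expansion_superdiag_coeff:
  fixes scW :: "complex \<Rightarrow> 'w::banach \<Rightarrow> 'w"
  assumes V: "module scV" and W: "module scW" and adm: "admissible_norms scW nrm"
    and fl: "\<And>k. multilinear scV scW s k (fl k)"
    and Zs: "length Zs = l" "set Zs \<subseteq> dimmat s s"
    and F: "F \<in> dimmat (s * Suc l) (s * Suc l)"
    and lim: "(\<lambda>L. nrm (s * Suc l) (\<lambda>i j. F i j - (\<Sum>k<L. odot_apply s (Suc l)
        (\<lambda>a b. scV t (bidiag s (replicate (Suc l) (\<lambda>x y. 0)) Zs a b)) k (fl k) i j))) \<longlonglongrightarrow> 0"
    and xy: "x < s" "y < s"
  shows "F x (l * s + y) = scW (t ^ l) (fl l Zs x y)"
proof -
  interpret v: module scV by fact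
  define M where "M = (\<lambda>a b. scV t (bidiag s (replicate (Suc l) (\<lambda>x y. 0)) Zs a b))"
  define c where "c = scW (t ^ l) (fl l Zs x y)"
  have "blk s M a b = (if b = Suc a then (\<lambda>x y. scV t ((Zs ! a) x y)) else (\<lambda>x y. 0))"
    if "a < Suc l" "b < Suc l" for a b
  proof -
    have "blk s (bidiag s (replicate (Suc l) (\<lambda>x y. 0)) Zs) a b
        = (if b = Suc a then Zs ! a else (\<lambda>x y. 0))"
      using that by (intro blk_bidiag_zero_diagonal[OF Zs]) auto
    then show ?thesis unfolding M_def blk_scale[OF V] by auto
  qed
  moreover have "map (\<lambda>a x y. scV t ((Zs ! a) x y)) [0..<l] = map (\<lambda>Z a b. scV t (Z a b)) Zs"
    using Zs by (intro nth_equalityI) auto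
  ultimately have coeff: "odot_apply s (Suc l) M k (fl k) x (l * s + y) = (if k = l then c else 0)"
    for k
    using odot_apply_superdiag_entry[OF V W fl refl _ xy] multilinear_scale[OF V W fl Zs]
    unfolding c_def by simp
  have idx: "x < s * Suc l" "l * s + y < s * Suc l"
    using block_index_less[of 0 "Suc l" x s] block_index_less[of l "Suc l" y s] xy by auto
  have "(\<lambda>L. F x (l * s + y) - (\<Sum>k<L. odot_apply s (Suc l) M k (fl k) x (l * s + y))) \<longlonglongrightarrow> 0"
  proof (rule admissible_tendsto_entry[OF W adm idx,
        where M = "\<lambda>L i j. F i j - (\<Sum>k<L. odot_apply s (Suc l) M k (fl k) i j)"])
    show "(\<lambda>L i j. F i j - (\<Sum>k<L. odot_apply s (Suc l) M k (fl k) i j)) L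
        \<in> dimmat (s * Suc l) (s * Suc l)" for L
      using F by (simp add: dimmat_def odot_apply_def)
  qed (use lim in \<open>simp add: M_def\<close>)
  moreover have "\<forall>\<^sub>F L in sequentially.
      F x (l * s + y) - (\<Sum>k<L. odot_apply s (Suc l) M k (fl k) x (l * s + y)) = F x (l * s + y) - c"
    using eventually_ge_at_top[of "Suc l"] by eventually_elim (simp add: coeff)
  ultimately have "(\<lambda>L. F x (l * s + y) - c) \<longlonglongrightarrow> 0"
    by (rule Lim_transform_eventually)
  then show ?thesis unfolding c_def LIMSEQ_const_iff by simp
qed

theorem theorem7p9:
  fixes scV :: "complex \<Rightarrow> 'v::ab_group_add \<Rightarrow> 'v"
    and scW :: "complex \<Rightarrow> 'w::banach \<Rightarrow> 'w"
    and nrm :: "nat \<Rightarrow> 'w mtx \<Rightarrow> real"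
    and \<Omega> \<Gamma> :: "(nat \<times> 'v mtx) set"
    and f :: "nat \<times> 'v mtx \<Rightarrow> 'w mtx"
    and s :: nat and Y :: "'v mtx"
    and fl :: "nat \<Rightarrow> 'v mtx list \<Rightarrow> 'w mtx"
  assumes V: "vector_space scV"
    and W: "complex_banach scW"
    and adm: "admissible_norms scW nrm"
    and Om_nc: "nc_set \<Omega>" and Om_open: "finitely_open scV \<Omega>"
    and f_nc: "nc_fun scV scW \<Omega> f" and f_G: "G_diff scV scW \<Omega> f"
    and s_pos: "0 < s" and Y: "(s, Y) \<in> \<Omega>"
    and Gam_sub: "\<Gamma> \<subseteq> \<Omega>" and Gam_open: "finitely_open scV \<Gamma>"
    and Gam_Y: "\<And>m. 0 < m \<Longrightarrow> (s * m, dpow s Y m) \<in> \<Gamma>"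
    and fl_lin: "\<And>l. multilinear scV scW s l (fl l)"
    and series: "\<And>m X. 0 < m \<Longrightarrow> (s * m, X) \<in> \<Gamma> \<Longrightarrow>
        (\<lambda>L. nrm (s * m) (\<lambda>i j. f (s * m, X) i j -
            (\<Sum>l<L. odot_apply s m (\<lambda>a b. X a b - dpow s Y m a b) l (fl l) i j))) \<longlonglongrightarrow> 0"
  shows "\<forall>l Zs. length Zs = l \<longrightarrow> set Zs \<subseteq> dimmat s s \<longrightarrow>
           fl l Zs = DeltaR scV scW \<Omega> f s (replicate (Suc l) Y) Zs"
proof (intro allI impI)
  fix l and Zs :: "'v mtx list"
  assume Zs: "length Zs = l" "set Zs \<subseteq> dimmat s s"
  have V': "module scV" and W': "module scW"
    using V W module_iff_vector_space unfolding complex_banach_def by blast+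
  define m where "m = Suc l"
  define X where "X t = (\<lambda>a b. dpow s Y m a b + scV t (bidiag s (replicate m (\<lambda>x y. 0)) Zs a b))" for t
  have "dpow s Y m \<in> dimmat (s * m) (s * m)" "bidiag s (replicate m (\<lambda>x y. 0)) Zs \<in> dimmat (s * m) (s * m)"
    unfolding dpow_def bidiag_def dimmat_def by auto
  then obtain t where t: "t \<noteq> 0" "(s * m, X t) \<in> \<Gamma>"
    using finitely_open_line_nonzero[OF V Gam_open Gam_Y] unfolding X_def m_def by blast
  then have X\<Omega>: "(s * m, X t) \<in> \<Omega>" using Gam_sub by blast
  have coeff: "f (s * m, X t) x (l * s + y) = scW (t ^ l) (fl l Zs x y)" if "x < s" "y < s" for x y
  proof (rule expansion_superdiag_coeff[OF V' W' adm fl_lin Zs _ _ that])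
    show "f (s * m, X t) \<in> dimmat (s * Suc l) (s * Suc l)"
      using f_nc X\<Omega> unfolding nc_fun_def m_def by blast
    show "(\<lambda>L. nrm (s * Suc l) (\<lambda>i j. f (s * m, X t) i j - (\<Sum>k<L. odot_apply s (Suc l)
        (\<lambda>a b. scV t (bidiag s (replicate (Suc l) (\<lambda>x y. 0)) Zs a b)) k (fl k) i j))) \<longlonglongrightarrow> 0"
      using series[OF _ t(2)] by (simp add: X_def m_def)
  qed
  have "bidiag s (replicate m Y) Zs = sim scV (s * m) (tdiag s m t) (tdiag s m (inverse t)) (X t)"
    unfolding X_def by (rule bidiag_eq_sim_tdiag[OF V' t(1)])
  then have "nc_ext scV scW \<Omega> f (s * m) (bidiag s (replicate m Y) Zs)
      = sim scW (s * m) (tdiag s m t) (tdiag s m (inverse t)) (f (s * m, X t))"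
    using nc_ext_sim[OF V' W' Om_nc f_nc X\<Omega> inv_pair_tdiag[OF t(1)]] by simp
  then have "DeltaR scV scW \<Omega> f s (replicate (Suc l) Y) Zs
      = blk s (sim scW (s * m) (tdiag s m t) (tdiag s m (inverse t)) (f (s * m, X t))) 0 l"
    unfolding DeltaR_def by (simp add: Zs m_def)
  also have "\<dots> = fl l Zs"
  proof (intro ext)
    fix x y
    have "fl l Zs \<in> dimmat s s" using fl_lin Zs unfolding multilinear_def by blast
    moreover have "l < m" by (simp add: m_def)
    ultimately show "blk s (sim scW (s * m) (tdiag s m t) (tdiag s m (inverse t)) (f (s * m, X t))) 0 l x y
        = fl l Zs x y"
      using coeff t(1) unfolding blk_sim_tdiag[OF W' t(1) \<open>l < m\<close>] dimmat_def
      by (auto simp: module.scale_scale[OF W'] module.scale_one[OF W'] power_inverse)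
  qed
  finally show "fl l Zs = DeltaR scV scW \<Omega> f s (replicate (Suc l) Y) Zs" ..
qed

end
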